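(* Let $I$ be a set, $\lambda,\rho\colon I\to I$ bijections, and $E$ a non-trivial directed $\lambda,\rho$-weakly commutative generalized pseudo effect algebra. If the kite pseudo effect algebra $K^{\lambda,\rho}_I(E)$ satisfies RDP$_1$ and has a least non-trivial normal ideal, then $I$ is at most countable.
   Context: A generalized pseudo effect algebra (GPEA) is a structure $(E;+,0)$ with partial binary $+$ and constant $0$ such that for all $a,b,c$: (GP1) $a+b$ and $(a+b)+c$ exist iff $b+c$ and $a+(b+c)$ exist, and then they are equal; (GP2) if $a+b$ exists there are $d,e$ with $a+b=d+a=b+e$; (GP3) left and right cancellation; (GP4) $a+b=0$ implies $a=b=0$; (GP5) $a+0=0+a=a$. Non-trivial: $E\neq\{0\}$. Order: $a\le b$ iff $a+c=b$ for some $c$; for $a\le b$, $b\ominus_\ell a$ is the unique $d$ with $d+a=b$, $a\ominus_r b$ the unique $e$ with $a+e=b$. Directed: any two elements have a common upper bound. RDP$_1$: whenever $a_1+a_2=b_1+b_2$ there are $c_{11},c_{12},c_{21},c_{22}$ with $a_1=c_{11}+c_{12}$, $a_2=c_{21}+c_{22}$, $b_1=c_{11}+c_{21}$, $b_2=c_{12}+c_{22}$, such that $0\le x\le c_{12}$, $0\le y\le c_{21}$ imply $x+y=y+x$. An ideal is a non-empty subset closed under existing sums and downward closed; normal if $x+N=N+x$ for all $x$ ($x+N=\{x+y\colon y\in N,\ x+y\text{ defined}\}$, $N+x$ dually); non-trivial if $\neq\{0\}$; least non-trivial if contained in every non-trivial normal ideal. $\lambda,\rho$-weak commutativity: for all families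 $(f_j)$, $(a_i)$ in $E$ and all $i$: $f_{\rho^{-1}(i)}+a_i$ defined iff $a_i+f_{\lambda^{-1}(i)}$ defined, and $f_{\lambda^{-1}(i)}+a_i$ defined iff $a_i+f_{\rho^{-1}(i)}$ defined. Kite $K^{\lambda,\rho}_I(E)$ (a pseudo effect algebra): universe $E^I\uplus\overline E^I$, $\overline E=\{\bar a\colon a\in E\}$ a disjoint copy; $0=\langle 0\rangle$, $1=\langle\bar 0\rangle$; $\langle\bar a_i\rangle+\langle\bar b_i\rangle$ undefined; $\langle\bar a_i\colon i\in I\rangle+\langle f_j\colon j\in I\rangle=\langle\overline{f_{\rho^{-1}(i)}\ominus_r a_i}\rangle$ when $f_{\rho^{-1}(i)}\le a_i$ for all $i$; $\langle f_j\rangle+\langle\bar a_i\rangle=\langle\overline{a_i\ominus_\ell f_{\lambda^{-1}(i)}}\rangle$ when $f_{\lambda^{-1}(i)}\le a_i$ for all $i$; $\langle f_j\rangle+\langle g_j\rangle=\langle f_j+g_j\rangle$ when all coordinate sums are defined. *)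

theory Defs
  imports Main "HOL-Library.FuncSet" "HOL-Library.Countable_Set"
begin

definition pleq :: "'a set \<Rightarrow> ('a \<Rightarrow> 'a \<Rightarrow> 'a option) \<Rightarrow> 'a \<Rightarrow> 'a \<Rightarrow> bool" where
  "pleq S p a b \<longleftrightarrow> (\<exists>c\<in>S. p a c = Some b)"

definition minus_l :: "'a set \<Rightarrow> ('a \<Rightarrow> 'a \<Rightarrow> 'a option) \<Rightarrow> 'a \<Rightarrow> 'a \<Rightarrow> 'a" where
  "minus_l S p b a = (THE d. d \<in> S \<and> p d a = Some b)"

definition minus_r :: "'a set \<Rightarrow> ('a \<Rightarrow> 'a \<Rightarrow> 'a option) \<Rightarrow> 'a \<Rightarrow> 'a \<Rightarrow> 'a" where
  "minus_r S p a b = (THE e. e \<in> S \<and> p a e = Some b)"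

definition gpea :: "'a set \<Rightarrow> ('a \<Rightarrow> 'a \<Rightarrow> 'a option) \<Rightarrow> 'a \<Rightarrow> bool" where
  "gpea E p z \<longleftrightarrow>
     z \<in> E \<and>
     (\<forall>a\<in>E. \<forall>b\<in>E. \<forall>c. p a b = Some c \<longrightarrow> c \<in> E) \<and>
     \<comment> \<open>GP1\<close>
     (\<forall>a\<in>E. \<forall>b\<in>E. \<forall>c\<in>E. Option.bind (p a b) (\<lambda>s. p s c) = Option.bind (p b c) (\<lambda>t. p a t)) \<and>
     \<comment> \<open>GP2\<close>
     (\<forall>a\<in>E. \<forall>b\<in>E. \<forall>s. p a b = Some s \<longrightarrow> (\<exists>d\<in>E. \<exists>e\<in>E. p d a = Some s \<and> p b e = Some s)) \<and>
     \<comment> \<open>GP3\<close>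
     (\<forall>a\<in>E. \<forall>b\<in>E. \<forall>c\<in>E. p a b \<noteq> None \<and> p a b = p a c \<longrightarrow> b = c) \<and>
     (\<forall>a\<in>E. \<forall>b\<in>E. \<forall>c\<in>E. p b a \<noteq> None \<and> p b a = p c a \<longrightarrow> b = c) \<and>
     \<comment> \<open>GP4\<close>
     (\<forall>a\<in>E. \<forall>b\<in>E. p a b = Some z \<longrightarrow> a = z \<and> b = z) \<and>
     \<comment> \<open>GP5\<close>
     (\<forall>a\<in>E. p a z = Some a \<and> p z a = Some a)"

definition directed :: "'a set \<Rightarrow> ('a \<Rightarrow> 'a \<Rightarrow> 'a option) \<Rightarrow> bool" where
  "directed E p \<longleftrightarrow> (\<forall>a\<in>E. \<forall>b\<in>E. \<exists>c\<in>E. pleq E p a c \<and> pleq E p b c)"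

definition weakly_comm ::
  "'i set \<Rightarrow> ('i \<Rightarrow> 'i) \<Rightarrow> ('i \<Rightarrow> 'i) \<Rightarrow> 'a set \<Rightarrow> ('a \<Rightarrow> 'a \<Rightarrow> 'a option) \<Rightarrow> bool" where
  "weakly_comm I lam rho E p \<longleftrightarrow>
     (\<forall>f\<in>I \<rightarrow> E. \<forall>a\<in>I \<rightarrow> E. \<forall>i\<in>I.
        (p (f (inv_into I rho i)) (a i) \<noteq> None \<longleftrightarrow> p (a i) (f (inv_into I lam i)) \<noteq> None) \<and>
        (p (f (inv_into I lam i)) (a i) \<noteq> None \<longleftrightarrow> p (a i) (f (inv_into I rho i)) \<noteq> None))"

text \<open>Kite: Inl f stands for \<langle>f_j\<rangle> \<in> E^I, Inr a for \<langle>bar a_i\<rangle> \<in> bar E^I.\<close>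
definition kite_carrier :: "'i set \<Rightarrow> 'a set \<Rightarrow> (('i \<Rightarrow> 'a) + ('i \<Rightarrow> 'a)) set" where
  "kite_carrier I E = Inl ` (I \<rightarrow>\<^sub>E E) \<union> Inr ` (I \<rightarrow>\<^sub>E E)"

definition kite_zero :: "'i set \<Rightarrow> 'a \<Rightarrow> ('i \<Rightarrow> 'a) + ('i \<Rightarrow> 'a)" where
  "kite_zero I z = Inl (\<lambda>i\<in>I. z)"

definition kite_plus ::
  "'i set \<Rightarrow> ('i \<Rightarrow> 'i) \<Rightarrow> ('i \<Rightarrow> 'i) \<Rightarrow> 'a set \<Rightarrow> ('a \<Rightarrow> 'a \<Rightarrow> 'a option)
   \<Rightarrow> ('i \<Rightarrow> 'a) + ('i \<Rightarrow> 'a) \<Rightarrow> ('i \<Rightarrow> 'a) + ('i \<Rightarrow> 'a) \<Rightarrow> (('i \<Rightarrow> 'a) + ('i \<Rightarrow> 'a)) option" where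
  "kite_plus I lam rho E p x y =
     (case (x, y) of
        (Inr a, Inr b) \<Rightarrow> None
      | (Inr a, Inl f) \<Rightarrow>
          (if \<forall>i\<in>I. pleq E p (f (inv_into I rho i)) (a i)
           then Some (Inr (\<lambda>i\<in>I. minus_r E p (f (inv_into I rho i)) (a i))) else None)
      | (Inl f, Inr a) \<Rightarrow>
          (if \<forall>i\<in>I. pleq E p (f (inv_into I lam i)) (a i)
           then Some (Inr (\<lambda>i\<in>I. minus_l E p (a i) (f (inv_into I lam i)))) else None)
      | (Inl f, Inl g) \<Rightarrow>
          (if \<forall>i\<in>I. p (f i) (g i) \<noteq> None
           then Some (Inl (\<lambda>i\<in>I. the (p (f i) (g i)))) else None))"

definition RDP1 :: "'b set \<Rightarrow> ('b \<Rightarrow> 'b \<Rightarrow> 'b option) \<Rightarrow> 'b \<Rightarrow> bool" where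
  "RDP1 S p z \<longleftrightarrow>
     (\<forall>a1\<in>S. \<forall>a2\<in>S. \<forall>b1\<in>S. \<forall>b2\<in>S. p a1 a2 \<noteq> None \<and> p a1 a2 = p b1 b2 \<longrightarrow>
        (\<exists>c11\<in>S. \<exists>c12\<in>S. \<exists>c21\<in>S. \<exists>c22\<in>S.
            p c11 c12 = Some a1 \<and> p c21 c22 = Some a2 \<and>
            p c11 c21 = Some b1 \<and> p c12 c22 = Some b2 \<and>
            (\<forall>x\<in>S. \<forall>y\<in>S. pleq S p z x \<and> pleq S p x c12 \<and> pleq S p z y \<and> pleq S p y c21
                \<longrightarrow> p x y = p y x)))"

definition is_ideal :: "'b set \<Rightarrow> ('b \<Rightarrow> 'b \<Rightarrow> 'b option) \<Rightarrow> 'b set \<Rightarrow> bool" where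
  "is_ideal S p N \<longleftrightarrow>
     N \<noteq> {} \<and> N \<subseteq> S \<and>
     (\<forall>x\<in>N. \<forall>y\<in>N. \<forall>s. p x y = Some s \<longrightarrow> s \<in> N) \<and>
     (\<forall>x\<in>N. \<forall>y\<in>S. pleq S p y x \<longrightarrow> y \<in> N)"

definition is_normal_ideal :: "'b set \<Rightarrow> ('b \<Rightarrow> 'b \<Rightarrow> 'b option) \<Rightarrow> 'b set \<Rightarrow> bool" where
  "is_normal_ideal S p N \<longleftrightarrow> is_ideal S p N \<and>
     (\<forall>x\<in>S. {s. \<exists>y\<in>N. p x y = Some s} = {s. \<exists>y\<in>N. p y x = Some s})"

definition has_least_nontrivial_normal_ideal :: "'b set \<Rightarrow> ('b \<Rightarrow> 'b \<Rightarrow> 'b option) \<Rightarrow> 'b \<Rightarrow> bool" where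
  "has_least_nontrivial_normal_ideal S p z \<longleftrightarrow>
     (\<exists>N. is_normal_ideal S p N \<and> N \<noteq> {z} \<and>
        (\<forall>M. is_normal_ideal S p M \<and> M \<noteq> {z} \<longrightarrow> N \<subseteq> M))"

end

theory Submission
  imports Defs
begin

text \<open>A set \<open>J \<subseteq> I\<close> of indices invariant under \<open>\<lambda>\<close> and \<open>\<rho>\<close> yields a normal ideal of
  the kite, consisting of the elements \<open>\<langle>f\<^sub>j\<rangle> \<in> E\<^sup>I\<close> supported on \<open>J\<close>. If both \<open>J\<close> and
  \<open>I - J\<close> are non-empty, the ideals for \<open>J\<close> and \<open>I - J\<close> are non-trivial but meet only
  in \<open>0\<close>, so there is no least non-trivial normal ideal. Hence \<open>I\<close> is a single orbit of
  the group generated by \<open>\<lambda>\<close> and \<open>\<rho>\<close>, which is countable.\<close>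

locale gpea_alg =
  fixes E :: "'a set" and p :: "'a \<Rightarrow> 'a \<Rightarrow> 'a option" and z :: 'a
  assumes gpea: "gpea E p z"
begin

lemma zero_mem: "z \<in> E"
  using gpea unfolding gpea_def by (elim conjE) blast

lemma plus_closed: "a \<in> E \<Longrightarrow> b \<in> E \<Longrightarrow> p a b = Some c \<Longrightarrow> c \<in> E"
  using gpea unfolding gpea_def by (elim conjE) blast

lemma plus_exchange:
  "a \<in> E \<Longrightarrow> b \<in> E \<Longrightarrow> p a b = Some s \<Longrightarrow> \<exists>d\<in>E. \<exists>e\<in>E. p d a = Some s \<and> p b e = Some s"
  using gpea unfolding gpea_def by (elim conjE) blast

lemma plus_left_cancel: "a \<in> E \<Longrightarrow> b \<in> E \<Longrightarrow> c \<in> E \<Longrightarrow> p a b = Some s \<Longrightarrow> p a c = Some s \<Longrightarrow> b = c"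
  using gpea unfolding gpea_def by (elim conjE) (metis option.distinct(1))

lemma plus_right_cancel: "a \<in> E \<Longrightarrow> b \<in> E \<Longrightarrow> c \<in> E \<Longrightarrow> p b a = Some s \<Longrightarrow> p c a = Some s \<Longrightarrow> b = c"
  using gpea unfolding gpea_def by (elim conjE) (metis option.distinct(1))

lemma plus_eq_zeroD: "a \<in> E \<Longrightarrow> b \<in> E \<Longrightarrow> p a b = Some z \<Longrightarrow> a = z"
  using gpea unfolding gpea_def by (elim conjE) blast

lemma plus_zero_right: "a \<in> E \<Longrightarrow> p a z = Some a"
  and plus_zero_left: "a \<in> E \<Longrightarrow> p z a = Some a"
  using gpea unfolding gpea_def by (elim conjE; blast)+

lemma minus_r_eq: "a \<in> E \<Longrightarrow> c \<in> E \<Longrightarrow> p a c = Some b \<Longrightarrow> minus_r E p a b = c"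
  unfolding minus_r_def by (rule the_equality) (auto intro: plus_left_cancel)

lemma minus_l_eq: "a \<in> E \<Longrightarrow> d \<in> E \<Longrightarrow> p d a = Some b \<Longrightarrow> minus_l E p b a = d"
  unfolding minus_l_def by (rule the_equality) (auto intro: plus_right_cancel)

lemma plus_move_left:
  assumes "a \<in> E" "b \<in> E" "p a b = Some s"
  shows "\<exists>d\<in>E. p d a = Some s \<and> (b = z \<longrightarrow> d = z)"
  using assms plus_exchange zero_mem plus_zero_left plus_zero_right by (cases "b = z") auto

lemma plus_move_right:
  assumes "a \<in> E" "b \<in> E" "p a b = Some s"
  shows "\<exists>e\<in>E. p b e = Some s \<and> (a = z \<longrightarrow> e = z)"
  using assms plus_exchange zero_mem plus_zero_left plus_zero_right by (cases "a = z") auto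

end

definition kite_invariant :: "'i set \<Rightarrow> ('i \<Rightarrow> 'i) \<Rightarrow> ('i \<Rightarrow> 'i) \<Rightarrow> 'i set \<Rightarrow> bool" where
  "kite_invariant I lam rho J \<longleftrightarrow> (\<forall>j\<in>I. (lam j \<in> J \<longleftrightarrow> j \<in> J) \<and> (rho j \<in> J \<longleftrightarrow> j \<in> J))"

definition kite_support_ideal :: "'i set \<Rightarrow> 'a set \<Rightarrow> 'a \<Rightarrow> 'i set \<Rightarrow> (('i \<Rightarrow> 'a) + ('i \<Rightarrow> 'a)) set" where
  "kite_support_ideal I E z J = Inl ` {f \<in> I \<rightarrow>\<^sub>E E. \<forall>i\<in>I - J. f i = z}"

lemma Inl_mem_kite_support_ideal [simp]:
  "Inl f \<in> kite_support_ideal I E z J \<longleftrightarrow> f \<in> I \<rightarrow>\<^sub>E E \<and> (\<forall>i\<in>I - J. f i = z)"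
  by (auto simp: kite_support_ideal_def)

lemma kite_support_ideal_cases:
  assumes "y \<in> kite_support_ideal I E z J"
  obtains f where "y = Inl f" "f \<in> I \<rightarrow>\<^sub>E E" "\<forall>i\<in>I - J. f i = z"
  using assms by (auto simp: kite_support_ideal_def)

lemma kite_invariant_lamD: "kite_invariant I lam rho J \<Longrightarrow> \<forall>j\<in>I. lam j \<in> J \<longleftrightarrow> j \<in> J"
  and kite_invariant_rhoD: "kite_invariant I lam rho J \<Longrightarrow> \<forall>j\<in>I. rho j \<in> J \<longleftrightarrow> j \<in> J"
  by (simp_all add: kite_invariant_def)

lemma bij_betw_inv_into_mem:
  assumes "bij_betw l I I" "i \<in> I"
  shows "inv_into I l i \<in> I" and "l (inv_into I l i) = i"
  using assms by (auto simp: bij_betw_imp_surj_on intro: inv_into_into bij_betw_inv_into_right)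

lemma inv_into_mem_invariant_iff:
  assumes "bij_betw l I I" "\<forall>j\<in>I. l j \<in> J \<longleftrightarrow> j \<in> J" "i \<in> I"
  shows "inv_into I l i \<in> J \<longleftrightarrow> i \<in> J"
  using assms(2) bij_betw_inv_into_mem[OF assms(1,3)] by force

lemma supported_choice:
  assumes "\<forall>i\<in>I. \<exists>d\<in>E. P i d \<and> (i \<notin> J \<longrightarrow> d = z)"
  obtains f where "f \<in> I \<rightarrow>\<^sub>E E" "\<forall>i\<in>I - J. f i = z" "\<forall>i\<in>I. P i (f i)"
proof -
  from assms have "\<forall>i\<in>I. \<exists>d. d \<in> E \<and> P i d \<and> (i \<notin> J \<longrightarrow> d = z)"
    by blast
  then obtain e where "\<forall>i\<in>I. e i \<in> E \<and> P i (e i) \<and> (i \<notin> J \<longrightarrow> e i = z)"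
    by (rule bchoice[THEN exE])
  then show ?thesis
    by (intro that[of "restrict e I"]) auto
qed

lemma supported_choice_reindex:
  assumes "bij_betw l I I" "\<forall>j\<in>I. l j \<in> J \<longleftrightarrow> j \<in> J"
    and "\<forall>i\<in>I. \<exists>d\<in>E. P i d \<and> (i \<notin> J \<longrightarrow> d = z)"
  obtains f where "f \<in> I \<rightarrow>\<^sub>E E" "\<forall>i\<in>I - J. f i = z" "\<forall>i\<in>I. P i (f (inv_into I l i))"
proof -
  obtain e where e: "e \<in> I \<rightarrow>\<^sub>E E" "\<forall>i\<in>I - J. e i = z" "\<forall>i\<in>I. P i (e i)"
    using assms(3) by (rule supported_choice)
  have "l j \<in> I" if "j \<in> I" for j
    using assms(1) that by (auto simp: bij_betw_def)
  with e(1,2) assms(2) have "(\<lambda>j\<in>I. e (l j)) \<in> I \<rightarrow>\<^sub>E E" "\<forall>i\<in>I - J. (\<lambda>j\<in>I. e (l j)) i = z"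
    by auto
  moreover have "\<forall>i\<in>I. P i ((\<lambda>j\<in>I. e (l j)) (inv_into I l i))"
    using e(3) bij_betw_inv_into_mem[OF assms(1)] by simp
  ultimately show ?thesis
    by (rule that)
qed

lemma kite_support_ideal_disjoint:
  "kite_support_ideal I E z J \<inter> kite_support_ideal I E z (I - J) \<subseteq> {kite_zero I z}"
proof
  fix x assume x: "x \<in> kite_support_ideal I E z J \<inter> kite_support_ideal I E z (I - J)"
  then obtain f where f: "x = Inl f" "f \<in> I \<rightarrow>\<^sub>E E" "\<forall>i\<in>I - J. f i = z"
    by (blast elim: kite_support_ideal_cases)
  moreover have "\<forall>i\<in>I \<inter> J. f i = z"
    using x f(1) by auto
  ultimately have "x = Inl (\<lambda>i\<in>I. z)"
    by (auto intro!: extensionalityI[of _ I] simp: PiE_iff)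
  then show "x \<in> {kite_zero I z}"
    by (simp add: kite_zero_def)
qed

definition orbit :: "('i \<Rightarrow> 'i) set \<Rightarrow> 'i \<Rightarrow> 'i set" where
  "orbit F x = (\<lambda>gs. foldr (\<circ>) gs id x) ` lists F"

lemma orbit_self: "x \<in> orbit F x"
  unfolding orbit_def by (rule image_eqI[of _ _ "[]"]) auto

lemma orbit_closed:
  assumes "g \<in> F" "y \<in> orbit F x"
  shows "g y \<in> orbit F x"
proof -
  obtain gs where "gs \<in> lists F" "y = foldr (\<circ>) gs id x"
    using assms(2) unfolding orbit_def by blast
  with assms(1) have "g # gs \<in> lists F" "g y = foldr (\<circ>) (g # gs) id x"
    by auto
  then show ?thesis
    unfolding orbit_def by blast
qed

lemma countable_orbit: "countable F \<Longrightarrow> countable (orbit F x)"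
  unfolding orbit_def by simp

lemma orbit_subset:
  assumes "\<forall>g\<in>F. \<forall>y\<in>I. g y \<in> I" "x \<in> I"
  shows "orbit F x \<subseteq> I"
proof -
  have "foldr (\<circ>) gs id x \<in> I" if "gs \<in> lists F" for gs
    using that by induction (use assms in auto)
  then show ?thesis
    unfolding orbit_def by blast
qed

locale kite_alg = gpea_alg E p z
  for E :: "'a set" and p :: "'a \<Rightarrow> 'a \<Rightarrow> 'a option" and z :: 'a +
  fixes I :: "'i set" and lam rho :: "'i \<Rightarrow> 'i"
  assumes lam_bij: "bij_betw lam I I" and rho_bij: "bij_betw rho I I"
begin

abbreviation kcarrier where "kcarrier \<equiv> kite_carrier I E"
abbreviation kplus where "kplus \<equiv> kite_plus I lam rho E p"

lemmas inv_lam_mem = bij_betw_inv_into_mem(1)[OF lam_bij]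
  and inv_rho_mem = bij_betw_inv_into_mem(1)[OF rho_bij]

lemma kite_plus_Inl_Inl:
  assumes "f \<in> I \<rightarrow>\<^sub>E E" "g \<in> I \<rightarrow>\<^sub>E E"
  shows "kplus (Inl f) (Inl g) = Some s \<longleftrightarrow>
    (\<exists>h \<in> I \<rightarrow>\<^sub>E E. s = Inl h \<and> (\<forall>i\<in>I. p (f i) (g i) = Some (h i)))"
proof
  assume sum: "kplus (Inl f) (Inl g) = Some s"
  then have "\<forall>i\<in>I. p (f i) (g i) \<noteq> None" and s: "s = Inl (\<lambda>i\<in>I. the (p (f i) (g i)))"
    unfolding kite_plus_def by (auto split: if_splits)
  then show "\<exists>h \<in> I \<rightarrow>\<^sub>E E. s = Inl h \<and> (\<forall>i\<in>I. p (f i) (g i) = Some (h i))"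
    using assms plus_closed by (intro bexI[of _ "\<lambda>i\<in>I. the (p (f i) (g i))"]) fastforce+
next
  assume "\<exists>h \<in> I \<rightarrow>\<^sub>E E. s = Inl h \<and> (\<forall>i\<in>I. p (f i) (g i) = Some (h i))"
  then obtain h where "h \<in> I \<rightarrow>\<^sub>E E" "s = Inl h" "\<forall>i\<in>I. p (f i) (g i) = Some (h i)"
    by blast
  then show "kplus (Inl f) (Inl g) = Some s"
    unfolding kite_plus_def by (auto intro!: extensionalityI[of _ I] simp: PiE_iff)
qed

lemma kite_plus_Inr_Inl:
  assumes "a \<in> I \<rightarrow>\<^sub>E E" "f \<in> I \<rightarrow>\<^sub>E E"
  shows "kplus (Inr a) (Inl f) = Some s \<longleftrightarrow>
    (\<exists>c \<in> I \<rightarrow>\<^sub>E E. s = Inr c \<and> (\<forall>i\<in>I. p (f (inv_into I rho i)) (c i) = Some (a i)))"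
proof
  assume "kplus (Inr a) (Inl f) = Some s"
  then have le: "\<forall>i\<in>I. pleq E p (f (inv_into I rho i)) (a i)"
    and s: "s = Inr (\<lambda>i\<in>I. minus_r E p (f (inv_into I rho i)) (a i))"
    unfolding kite_plus_def by (auto split: if_splits)
  have "minus_r E p (f (inv_into I rho i)) (a i) \<in> E \<and>
      p (f (inv_into I rho i)) (minus_r E p (f (inv_into I rho i)) (a i)) = Some (a i)"
    if "i \<in> I" for i
    using le that assms inv_rho_mem minus_r_eq unfolding pleq_def by fastforce
  with s show "\<exists>c \<in> I \<rightarrow>\<^sub>E E. s = Inr c \<and> (\<forall>i\<in>I. p (f (inv_into I rho i)) (c i) = Some (a i))"
    by (intro bexI[of _ "\<lambda>i\<in>I. minus_r E p (f (inv_into I rho i)) (a i)"]) auto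
next
  assume "\<exists>c \<in> I \<rightarrow>\<^sub>E E. s = Inr c \<and> (\<forall>i\<in>I. p (f (inv_into I rho i)) (c i) = Some (a i))"
  then obtain c where c: "c \<in> I \<rightarrow>\<^sub>E E" "s = Inr c"
    and sum: "\<forall>i\<in>I. p (f (inv_into I rho i)) (c i) = Some (a i)"
    by blast
  have "minus_r E p (f (inv_into I rho i)) (a i) = c i" if "i \<in> I" for i
    using that sum c assms inv_rho_mem minus_r_eq by blast
  moreover have "\<forall>i\<in>I. pleq E p (f (inv_into I rho i)) (a i)"
    using sum c unfolding pleq_def by blast
  ultimately show "kplus (Inr a) (Inl f) = Some s"
    unfolding kite_plus_def using c by (auto intro!: extensionalityI[of _ I] simp: PiE_iff)
qed

lemma kite_plus_Inl_Inr:
  assumes "f \<in> I \<rightarrow>\<^sub>E E" "a \<in> I \<rightarrow>\<^sub>E E"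
  shows "kplus (Inl f) (Inr a) = Some s \<longleftrightarrow>
    (\<exists>c \<in> I \<rightarrow>\<^sub>E E. s = Inr c \<and> (\<forall>i\<in>I. p (c i) (f (inv_into I lam i)) = Some (a i)))"
proof
  assume "kplus (Inl f) (Inr a) = Some s"
  then have le: "\<forall>i\<in>I. pleq E p (f (inv_into I lam i)) (a i)"
    and s: "s = Inr (\<lambda>i\<in>I. minus_l E p (a i) (f (inv_into I lam i)))"
    unfolding kite_plus_def by (auto split: if_splits)
  have "minus_l E p (a i) (f (inv_into I lam i)) \<in> E \<and>
      p (minus_l E p (a i) (f (inv_into I lam i))) (f (inv_into I lam i)) = Some (a i)"
    if i: "i \<in> I" for i
  proof -
    have fi: "f (inv_into I lam i) \<in> E"
      using assms i inv_lam_mem by blast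
    then obtain d where "d \<in> E" "p d (f (inv_into I lam i)) = Some (a i)"
      using le i plus_move_left unfolding pleq_def by metis
    with fi show ?thesis
      using minus_l_eq by simp
  qed
  with s show "\<exists>c \<in> I \<rightarrow>\<^sub>E E. s = Inr c \<and> (\<forall>i\<in>I. p (c i) (f (inv_into I lam i)) = Some (a i))"
    by (intro bexI[of _ "\<lambda>i\<in>I. minus_l E p (a i) (f (inv_into I lam i))"]) auto
next
  assume "\<exists>c \<in> I \<rightarrow>\<^sub>E E. s = Inr c \<and> (\<forall>i\<in>I. p (c i) (f (inv_into I lam i)) = Some (a i))"
  then obtain c where c: "c \<in> I \<rightarrow>\<^sub>E E" "s = Inr c"
    and sum: "\<forall>i\<in>I. p (c i) (f (inv_into I lam i)) = Some (a i)"
    by blast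
  have "minus_l E p (a i) (f (inv_into I lam i)) = c i" if "i \<in> I" for i
    using that sum c assms inv_lam_mem minus_l_eq by blast
  moreover have "pleq E p (f (inv_into I lam i)) (a i)" if "i \<in> I" for i
    using that sum c assms inv_lam_mem plus_move_right unfolding pleq_def by (metis PiE_mem)
  ultimately show "kplus (Inl f) (Inr a) = Some s"
    unfolding kite_plus_def using c by (auto intro!: extensionalityI[of _ I] simp: PiE_iff)
qed

lemma kite_plus_eq_InlD: "kplus x y = Some (Inl f) \<Longrightarrow> \<exists>g h. x = Inl g \<and> y = Inl h"
  unfolding kite_plus_def by (cases x; cases y) (auto split: if_splits)

abbreviation supp_ideal where "supp_ideal J \<equiv> kite_support_ideal I E z J"

lemma kite_support_ideal_is_ideal: "is_ideal kcarrier kplus (supp_ideal J)"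
  unfolding is_ideal_def
proof (intro conjI ballI allI impI)
  have "Inl (\<lambda>i\<in>I. z) \<in> supp_ideal J"
    using zero_mem by simp
  then show "supp_ideal J \<noteq> {}"
    by blast
  show "supp_ideal J \<subseteq> kcarrier"
    by (auto simp: kite_carrier_def kite_support_ideal_def)
next
  fix x y s assume x: "x \<in> supp_ideal J" and y: "y \<in> supp_ideal J" and sum: "kplus x y = Some s"
  obtain f g where f: "x = Inl f" "f \<in> I \<rightarrow>\<^sub>E E" "\<forall>i\<in>I - J. f i = z"
    and g: "y = Inl g" "g \<in> I \<rightarrow>\<^sub>E E" "\<forall>i\<in>I - J. g i = z"
    using x y by (elim kite_support_ideal_cases)
  then obtain h where h: "h \<in> I \<rightarrow>\<^sub>E E" "s = Inl h" "\<forall>i\<in>I. p (f i) (g i) = Some (h i)"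
    using sum kite_plus_Inl_Inl by auto
  have "\<forall>i\<in>I - J. h i = z"
    using f(3) g(3) h(3) plus_zero_left[OF zero_mem] by auto
  with h show "s \<in> supp_ideal J"
    by simp
next
  fix x y assume x: "x \<in> supp_ideal J" and y: "y \<in> kcarrier" and "pleq kcarrier kplus y x"
  then obtain c where c: "c \<in> kcarrier" "kplus y c = Some x"
    unfolding pleq_def by blast
  obtain f where f: "x = Inl f" "\<forall>i\<in>I - J. f i = z"
    using x by (elim kite_support_ideal_cases)
  obtain g h where gh: "y = Inl g" "c = Inl h"
    using kite_plus_eq_InlD c(2) f(1) by blast
  have "g \<in> I \<rightarrow>\<^sub>E E" "h \<in> I \<rightarrow>\<^sub>E E"
    using y c(1) gh by (auto simp: kite_carrier_def)
  moreover from this have "\<forall>i\<in>I. p (g i) (h i) = Some (f i)"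
    using c(2) gh f(1) kite_plus_Inl_Inl by auto
  ultimately have "\<forall>i\<in>I - J. g i = z"
    using f(2) plus_eq_zeroD by (metis DiffD1 PiE_mem)
  with \<open>g \<in> I \<rightarrow>\<^sub>E E\<close> show "y \<in> supp_ideal J"
    using gh(1) by simp
qed

lemma kite_support_ideal_Inl_left:
  assumes "g \<in> I \<rightarrow>\<^sub>E E" "y \<in> supp_ideal J" "kplus (Inl g) y = Some s"
  shows "\<exists>y'\<in>supp_ideal J. kplus y' (Inl g) = Some s"
proof -
  obtain f where f: "y = Inl f" "f \<in> I \<rightarrow>\<^sub>E E" "\<forall>i\<in>I - J. f i = z"
    using assms(2) by (rule kite_support_ideal_cases)
  obtain h where h: "s = Inl h" "h \<in> I \<rightarrow>\<^sub>E E" "\<forall>i\<in>I. p (g i) (f i) = Some (h i)"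
    using assms(3) f(1) kite_plus_Inl_Inl[OF assms(1) f(2)] by blast
  have "\<forall>i\<in>I. \<exists>d\<in>E. p d (g i) = Some (h i) \<and> (i \<notin> J \<longrightarrow> d = z)"
  proof
    fix i assume i: "i \<in> I"
    have "g i \<in> E" "f i \<in> E"
      using i assms(1) f(2) by auto
    then have "\<exists>d\<in>E. p d (g i) = Some (h i) \<and> (f i = z \<longrightarrow> d = z)"
      by (rule plus_move_left[OF _ _ h(3)[rule_format, OF i]])
    with f(3) i show "\<exists>d\<in>E. p d (g i) = Some (h i) \<and> (i \<notin> J \<longrightarrow> d = z)"
      by auto
  qed
  then obtain f' where f': "f' \<in> I \<rightarrow>\<^sub>E E" "\<forall>i\<in>I - J. f' i = z" "\<forall>i\<in>I. p (f' i) (g i) = Some (h i)"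
    by (rule supported_choice)
  then have "kplus (Inl f') (Inl g) = Some s"
    using kite_plus_Inl_Inl[OF f'(1) assms(1)] h(1,2) by blast
  with f' show ?thesis
    by auto
qed

lemma kite_support_ideal_Inl_right:
  assumes "g \<in> I \<rightarrow>\<^sub>E E" "y \<in> supp_ideal J" "kplus y (Inl g) = Some s"
  shows "\<exists>y'\<in>supp_ideal J. kplus (Inl g) y' = Some s"
proof -
  obtain f where f: "y = Inl f" "f \<in> I \<rightarrow>\<^sub>E E" "\<forall>i\<in>I - J. f i = z"
    using assms(2) by (rule kite_support_ideal_cases)
  obtain h where h: "s = Inl h" "h \<in> I \<rightarrow>\<^sub>E E" "\<forall>i\<in>I. p (f i) (g i) = Some (h i)"
    using assms(3) f(1) kite_plus_Inl_Inl[OF f(2) assms(1)] by blast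
  have "\<forall>i\<in>I. \<exists>e\<in>E. p (g i) e = Some (h i) \<and> (i \<notin> J \<longrightarrow> e = z)"
  proof
    fix i assume i: "i \<in> I"
    have "f i \<in> E" "g i \<in> E"
      using i assms(1) f(2) by auto
    then have "\<exists>e\<in>E. p (g i) e = Some (h i) \<and> (f i = z \<longrightarrow> e = z)"
      by (rule plus_move_right[OF _ _ h(3)[rule_format, OF i]])
    with f(3) i show "\<exists>e\<in>E. p (g i) e = Some (h i) \<and> (i \<notin> J \<longrightarrow> e = z)"
      by auto
  qed
  then obtain f' where f': "f' \<in> I \<rightarrow>\<^sub>E E" "\<forall>i\<in>I - J. f' i = z" "\<forall>i\<in>I. p (g i) (f' i) = Some (h i)"
    by (rule supported_choice)
  then have "kplus (Inl g) (Inl f') = Some s"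
    using kite_plus_Inl_Inl[OF assms(1) f'(1)] h(1,2) by blast
  with f' show ?thesis
    by auto
qed

text \<open>For the two mixed sums the index shift by \<open>\<rho>\<close> on one side becomes a shift by
  \<open>\<lambda>\<close> on the other; invariance of \<open>J\<close> keeps the support inside \<open>J\<close>.\<close>

lemma kite_support_ideal_Inr_left:
  assumes J: "kite_invariant I lam rho J"
    and "a \<in> I \<rightarrow>\<^sub>E E" "y \<in> supp_ideal J" "kplus (Inr a) y = Some s"
  shows "\<exists>y'\<in>supp_ideal J. kplus y' (Inr a) = Some s"
proof -
  obtain f where f: "y = Inl f" "f \<in> I \<rightarrow>\<^sub>E E" "\<forall>i\<in>I - J. f i = z"
    using assms(3) by (rule kite_support_ideal_cases)
  obtain c where c: "s = Inr c" "c \<in> I \<rightarrow>\<^sub>E E" "\<forall>i\<in>I. p (f (inv_into I rho i)) (c i) = Some (a i)"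
    using assms(4) f(1) kite_plus_Inr_Inl[OF assms(2) f(2)] by blast
  have "\<forall>i\<in>I. \<exists>e\<in>E. p (c i) e = Some (a i) \<and> (i \<notin> J \<longrightarrow> e = z)"
  proof
    fix i assume i: "i \<in> I"
    have "f (inv_into I rho i) \<in> E" "c i \<in> E"
      using i f(2) c(2) inv_rho_mem by auto
    then have "\<exists>e\<in>E. p (c i) e = Some (a i) \<and> (f (inv_into I rho i) = z \<longrightarrow> e = z)"
      by (rule plus_move_right[OF _ _ c(3)[rule_format, OF i]])
    moreover have "i \<notin> J \<Longrightarrow> f (inv_into I rho i) = z"
      using f(3) i inv_rho_mem inv_into_mem_invariant_iff[OF rho_bij kite_invariant_rhoD[OF J] i]
      by blast
    ultimately show "\<exists>e\<in>E. p (c i) e = Some (a i) \<and> (i \<notin> J \<longrightarrow> e = z)"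
      by auto
  qed
  then obtain f' where f': "f' \<in> I \<rightarrow>\<^sub>E E" "\<forall>i\<in>I - J. f' i = z"
    "\<forall>i\<in>I. p (c i) (f' (inv_into I lam i)) = Some (a i)"
    by (rule supported_choice_reindex[OF lam_bij kite_invariant_lamD[OF J]])
  then have "kplus (Inl f') (Inr a) = Some s"
    using kite_plus_Inl_Inr[OF f'(1) assms(2)] c(1,2) by blast
  with f' show ?thesis
    by auto
qed

lemma kite_support_ideal_Inr_right:
  assumes J: "kite_invariant I lam rho J"
    and "a \<in> I \<rightarrow>\<^sub>E E" "y \<in> supp_ideal J" "kplus y (Inr a) = Some s"
  shows "\<exists>y'\<in>supp_ideal J. kplus (Inr a) y' = Some s"
proof -
  obtain f where f: "y = Inl f" "f \<in> I \<rightarrow>\<^sub>E E" "\<forall>i\<in>I - J. f i = z"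
    using assms(3) by (rule kite_support_ideal_cases)
  obtain c where c: "s = Inr c" "c \<in> I \<rightarrow>\<^sub>E E" "\<forall>i\<in>I. p (c i) (f (inv_into I lam i)) = Some (a i)"
    using assms(4) f(1) kite_plus_Inl_Inr[OF f(2) assms(2)] by blast
  have "\<forall>i\<in>I. \<exists>d\<in>E. p d (c i) = Some (a i) \<and> (i \<notin> J \<longrightarrow> d = z)"
  proof
    fix i assume i: "i \<in> I"
    have "c i \<in> E" "f (inv_into I lam i) \<in> E"
      using i f(2) c(2) inv_lam_mem by auto
    then have "\<exists>d\<in>E. p d (c i) = Some (a i) \<and> (f (inv_into I lam i) = z \<longrightarrow> d = z)"
      by (rule plus_move_left[OF _ _ c(3)[rule_format, OF i]])
    moreover have "i \<notin> J \<Longrightarrow> f (inv_into I lam i) = z"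
      using f(3) i inv_lam_mem inv_into_mem_invariant_iff[OF lam_bij kite_invariant_lamD[OF J] i]
      by blast
    ultimately show "\<exists>d\<in>E. p d (c i) = Some (a i) \<and> (i \<notin> J \<longrightarrow> d = z)"
      by auto
  qed
  then obtain f' where f': "f' \<in> I \<rightarrow>\<^sub>E E" "\<forall>i\<in>I - J. f' i = z"
    "\<forall>i\<in>I. p (f' (inv_into I rho i)) (c i) = Some (a i)"
    by (rule supported_choice_reindex[OF rho_bij kite_invariant_rhoD[OF J]])
  then have "kplus (Inr a) (Inl f') = Some s"
    using kite_plus_Inr_Inl[OF assms(2) f'(1)] c(1,2) by blast
  with f' show ?thesis
    by auto
qed

lemma kite_support_ideal_normal:
  assumes "kite_invariant I lam rho J"
  shows "is_normal_ideal kcarrier kplus (supp_ideal J)"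
  unfolding is_normal_ideal_def
proof (intro conjI ballI kite_support_ideal_is_ideal)
  fix x assume "x \<in> kcarrier"
  then consider g where "x = Inl g" "g \<in> I \<rightarrow>\<^sub>E E" | a where "x = Inr a" "a \<in> I \<rightarrow>\<^sub>E E"
    unfolding kite_carrier_def by blast
  then show "{s. \<exists>y\<in>supp_ideal J. kplus x y = Some s} = {s. \<exists>y\<in>supp_ideal J. kplus y x = Some s}"
  proof cases
    case 1
    then show ?thesis
      using kite_support_ideal_Inl_left[OF 1(2)] kite_support_ideal_Inl_right[OF 1(2)] by auto
  next
    case 2
    then show ?thesis
      using kite_support_ideal_Inr_left[OF assms 2(2)] kite_support_ideal_Inr_right[OF assms 2(2)]
      by auto
  qed
qed

lemma kite_support_ideal_nontrivial:
  assumes "k \<in> I" "k \<in> J" "e \<in> E" "e \<noteq> z"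
  shows "supp_ideal J \<noteq> {kite_zero I z}"
proof
  assume trivial: "supp_ideal J = {kite_zero I z}"
  have "Inl (\<lambda>i\<in>I. if i = k then e else z) \<in> supp_ideal J"
    using assms zero_mem by auto
  with trivial have "(\<lambda>i\<in>I. if i = k then e else z) = (\<lambda>i\<in>I. z)"
    by (simp add: kite_zero_def)
  from fun_cong[OF this, of k] assms(1,4) show False
    by simp
qed

lemma kite_invariant_complement:
  assumes "kite_invariant I lam rho J"
  shows "kite_invariant I lam rho (I - J)"
proof -
  have "lam j \<in> I" "rho j \<in> I" if "j \<in> I" for j
    using lam_bij rho_bij that by (auto dest: bij_betwE)
  with assms show ?thesis
    unfolding kite_invariant_def by blast
qed

lemma kite_invariant_orbit:
  assumes "i \<in> I"
  shows "kite_invariant I lam rho (orbit {lam, rho, inv_into I lam, inv_into I rho} i)"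
    and "orbit {lam, rho, inv_into I lam, inv_into I rho} i \<subseteq> I"
proof -
  let ?O = "orbit {lam, rho, inv_into I lam, inv_into I rho} i"
  have "\<forall>g\<in>{lam, rho, inv_into I lam, inv_into I rho}. \<forall>y\<in>I. g y \<in> I"
    using lam_bij rho_bij inv_lam_mem inv_rho_mem by (auto simp: bij_betw_def)
  then show "?O \<subseteq> I"
    using assms by (rule orbit_subset)
  show "kite_invariant I lam rho ?O"
  proof (unfold kite_invariant_def, intro ballI conjI iffI)
    fix j assume j: "j \<in> I"
    show "lam j \<in> ?O" if "j \<in> ?O"
      using orbit_closed[OF _ that, of lam] by simp
    show "rho j \<in> ?O" if "j \<in> ?O"
      using orbit_closed[OF _ that, of rho] by simp
    show "j \<in> ?O" if "lam j \<in> ?O"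
      using orbit_closed[OF _ that, of "inv_into I lam"] bij_betw_inv_into_left[OF lam_bij j] by simp
    show "j \<in> ?O" if "rho j \<in> ?O"
      using orbit_closed[OF _ that, of "inv_into I rho"] bij_betw_inv_into_left[OF rho_bij j] by simp
  qed
qed

lemma least_nontrivial_normal_ideal_invariant_trivial:
  assumes least: "has_least_nontrivial_normal_ideal kcarrier kplus (kite_zero I z)"
    and "E \<noteq> {z}" and J: "kite_invariant I lam rho J" "J \<subseteq> I"
  shows "J = {} \<or> J = I"
proof (rule ccontr)
  assume "\<not> (J = {} \<or> J = I)"
  with J(2) obtain j k where jk: "j \<in> I" "j \<in> J" "k \<in> I" "k \<in> I - J"
    by blast
  obtain e where e: "e \<in> E" "e \<noteq> z"
    using \<open>E \<noteq> {z}\<close> zero_mem by blast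
  obtain N where N: "is_normal_ideal kcarrier kplus N" "N \<noteq> {kite_zero I z}"
    and N_least: "\<And>M. is_normal_ideal kcarrier kplus M \<Longrightarrow> M \<noteq> {kite_zero I z} \<Longrightarrow> N \<subseteq> M"
    using least unfolding has_least_nontrivial_normal_ideal_def by blast
  have "N \<subseteq> supp_ideal J"
    by (rule N_least[OF kite_support_ideal_normal[OF J(1)] kite_support_ideal_nontrivial[OF jk(1,2) e]])
  moreover have "N \<subseteq> supp_ideal (I - J)"
    by (rule N_least[OF kite_support_ideal_normal[OF kite_invariant_complement[OF J(1)]]
      kite_support_ideal_nontrivial[OF jk(3,4) e]])
  ultimately have "N \<subseteq> {kite_zero I z}"
    using kite_support_ideal_disjoint[of I E z J] by blast
  moreover have "N \<noteq> {}"
    using N(1) unfolding is_normal_ideal_def is_ideal_def by blast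
  ultimately show False
    using N(2) by blast
qed

end

theorem lemma4p8:
  fixes I :: "'i set" and lam rho :: "'i \<Rightarrow> 'i"
    and E :: "'a set" and p :: "'a \<Rightarrow> 'a \<Rightarrow> 'a option" and z :: 'a
  assumes "bij_betw lam I I" and "bij_betw rho I I"
    and "gpea E p z" and "E \<noteq> {z}" and "directed E p"
    and "weakly_comm I lam rho E p"
    and "RDP1 (kite_carrier I E) (kite_plus I lam rho E p) (kite_zero I z)"
    and "has_least_nontrivial_normal_ideal (kite_carrier I E) (kite_plus I lam rho E p) (kite_zero I z)"
  shows "countable I"
proof (cases "I = {}")
  case False
  then obtain i where i: "i \<in> I"
    by blast
  interpret kite_alg E p z I lam rho
    using assms(1-3) by unfold_locales
  define J where "J = orbit {lam, rho, inv_into I lam, inv_into I rho} i"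
  have "kite_invariant I lam rho J" "J \<subseteq> I"
    unfolding J_def by (fact kite_invariant_orbit[OF i])+
  moreover have "i \<in> J"
    unfolding J_def by (rule orbit_self)
  ultimately have "J = I"
    using least_nontrivial_normal_ideal_invariant_trivial[OF assms(8,4)] by blast
  moreover have "countable J"
    unfolding J_def by (rule countable_orbit) simp
  ultimately show ?thesis
    by simp
qed simp

end
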